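(* For every integer $t\ge 1$ and every even integer $j$, the limit $$g_{22}(t,j)=\lim_{L\to\infty,\ L\text{ even}}\mathbb{E}_L\big[(h^{2t+2}_j-h^{2t}_j)(h^2_0-h^0_0)\big]$$ exists and $$g_{22}(t,j)=-\tfrac14\big[g_{11}(t-1,j)-g_{11}(t,j)\big],$$ where $g_{11}(s,j)=\frac{2^{-2s+1}(2s)!}{(s-\frac{j}{2})!(s+\frac{j}{2})!}$ for $|j|\le 2s$ and $g_{11}(s,j)=0$ for $|j|>2s$ (for $s\ge0$, $j$ even).
   Context: Let $L\ge 2$ be an even integer and index sites by $i\in\mathbb{Z}/L\mathbb{Z}$. The initial interface $h^0$ is "distributed" according to the un-normalized measure $\mu(dh^0)=\prod_i e^{-\frac12(h^0_{i+1}-h^0_i)^2}\,dh^0_i$; concretely, only height differences are meaningful and the increment vector $(h^0_{i+1}-h^0_i)_i$ has the law of i.i.d. standard Gaussians conditioned on having sum zero. Dynamics: for $t\ge1$, independently for each $i$ with $i+t$ even, $h^t_i=\tfrac12(h^{t-1}_{i-1}+h^{t-1}_{i+1})+\xi^t_i$ with $\xi^t_i$ independent centered Gaussians of variance $1/2$; $h^t_i=h^{t-1}_i$ for $i+t$ odd. $\mathbb{E}_L$ is expectation for this process on $\mathbb{Z}/L\mathbb{Z}$. *)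

theory Defs
  imports "HOL-Probability.Probability"
begin

text \<open>Coordinates (0,k) are i.i.d. standard Gaussians eta_k (used for the
  initial increments), coordinates (t,i) with t \<ge> 1 are the noises xi^t_i, centered
  Gaussians of variance 1/2 (standard deviation sqrt(1/2)).\<close>

definition noise_space :: "(nat \<times> nat \<Rightarrow> real) measure" where
  "noise_space = (\<Pi>\<^sub>M p\<in>(UNIV :: (nat \<times> nat) set).
      (if fst p = 0 then density lborel (normal_density 0 1)
       else density lborel (normal_density 0 (sqrt (1/2)))))"

definition site :: "nat \<Rightarrow> int \<Rightarrow> nat" where
  "site L i = nat (i mod int L)"

text \<open>Initial interface: increments h^0_{k+1}-h^0_k = eta_k - mean(eta), k<L, which
  is the law of i.i.d. standard Gaussians conditioned on sum zero; the height is
  pinned by h^0_0 = 0 (only height differences are meaningful, and the dynamics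
  commutes with global shifts).\<close>
fun hgt :: "nat \<Rightarrow> (nat \<times> nat \<Rightarrow> real) \<Rightarrow> nat \<Rightarrow> int \<Rightarrow> real" where
  "hgt L \<omega> 0 i =
     (\<Sum>k<site L i. \<omega> (0, k) - (\<Sum>m<L. \<omega> (0, m)) / real L)"
| "hgt L \<omega> (Suc t) i =
     (if even (i + int (Suc t))
      then (hgt L \<omega> t (i - 1) + hgt L \<omega> t (i + 1)) / 2 + \<omega> (Suc t, site L i)
      else hgt L \<omega> t i)"

definition g11 :: "nat \<Rightarrow> int \<Rightarrow> real" where
  "g11 s j = (if \<bar>j\<bar> \<le> 2 * int s
     then 2 / 4 ^ s * fact (2 * s) /
          (fact (nat (int s - j div 2)) * fact (nat (int s + j div 2)))
     else 0)"

end

theory Submission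
  imports Defs
begin

text \<open>
  Every height h^r_i is a finite linear combination of the independent
  centered Gaussian coordinates of the noise space, so products of heights are integrable
  and their expectations only involve the coordinate covariances.  Unrolling the first two
  steps of the dynamics writes the increment h^2_0 - h^0_0 as an explicit combination of
  seven coordinates.  Consequently the correlation  corr L r i = E[h^r_i (h^2_0 - h^0_0)]
  obeys the averaging recursion of the dynamics itself, plus a source term at the space-time
  points whose noise enters the increment.  Inside the light cone that does not feel the
  wrap-around of the torus this recursion is solved explicitly: for r \<ge> 2,
  corr L r i = 1/2 + B(r-2, i)/2, where B(n, i) is the transition kernel of simple random
  walk, and g11 s j = 2 B(2s, j).  Hence, once L is large compared with t and |j|, the
  expectation in the theorem already equals the claimed limit: the sequence is eventually
  constant.
\<close>

definition noise_sd :: "nat \<times> nat \<Rightarrow> real" where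
  "noise_sd p = (if fst p = 0 then 1 else sqrt (1/2))"

definition noise_var :: "nat \<times> nat \<Rightarrow> real" where
  "noise_var p = (if fst p = 0 then 1 else 1/2)"

definition noise_factor :: "nat \<times> nat \<Rightarrow> real measure" where
  "noise_factor p = density lborel (normal_density 0 (noise_sd p))"

lemma noise_sd_pos: "0 < noise_sd p"
  by (simp add: noise_sd_def)

lemma noise_var_eq_sd_squared: "noise_var p = (noise_sd p)\<^sup>2"
  by (simp add: noise_var_def noise_sd_def)

lemma noise_space_eq_PiM: "noise_space = PiM UNIV noise_factor"
  unfolding noise_space_def noise_factor_def noise_sd_def by (intro PiM_cong) auto

lemma normal_moment_1:
  fixes \<sigma> :: real
  assumes "0 < \<sigma>"
  shows "integrable (density lborel (normal_density 0 \<sigma>)) (\<lambda>x. x)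
       \<and> integral\<^sup>L (density lborel (normal_density 0 \<sigma>)) (\<lambda>x. x) = 0"
proof -
  have "integrable lborel (\<lambda>x. normal_density 0 \<sigma> x * x)"
    using integrable_normal_moment[OF assms, of 0 1] by simp
  moreover have "integral\<^sup>L lborel (\<lambda>x. normal_density 0 \<sigma> x * x) = 0"
    using integral_normal_moment_nz_1[OF assms, of 0] by simp
  ultimately show ?thesis
    by (simp add: integrable_density integral_density)
qed

lemma normal_moment_2:
  fixes \<sigma> :: real
  assumes "0 < \<sigma>"
  shows "integrable (density lborel (normal_density 0 \<sigma>)) (\<lambda>x. x * x)
       \<and> integral\<^sup>L (density lborel (normal_density 0 \<sigma>)) (\<lambda>x. x * x) = \<sigma>\<^sup>2"
proof -
  have "integrable lborel (\<lambda>x. normal_density 0 \<sigma> x * (x * x))"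
    using integrable_normal_moment[OF assms, of 0 2] by (simp add: power2_eq_square)
  moreover have "integral\<^sup>L lborel (\<lambda>x. normal_density 0 \<sigma> x * (x * x)) = \<sigma>\<^sup>2"
    using integral_normal_moment_even[OF assms, of 0 1] by (simp add: power2_eq_square)
  ultimately show ?thesis
    by (simp add: integrable_density integral_density)
qed

interpretation noise: product_prob_space noise_factor UNIV
  by (intro product_prob_space.intro product_sigma_finite.intro product_prob_space_axioms.intro)
     (auto simp: noise_factor_def intro: prob_space_normal_density noise_sd_pos
        prob_space_imp_sigma_finite)

lemma (in product_prob_space) integral_prod_coordinates:
  fixes f :: "'i \<Rightarrow> 'a \<Rightarrow> real"
  assumes J: "finite J" "J \<subseteq> I" and f: "\<And>i. i \<in> J \<Longrightarrow> integrable (M i) (f i)"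
  shows "integrable (PiM I M) (\<lambda>\<omega>. \<Prod>i\<in>J. f i (\<omega> i))
       \<and> integral\<^sup>L (PiM I M) (\<lambda>\<omega>. \<Prod>i\<in>J. f i (\<omega> i)) = (\<Prod>i\<in>J. integral\<^sup>L (M i) (f i))"
proof -
  let ?g = "\<lambda>x. \<Prod>i\<in>J. f i (x i)"
  have restrict_distr: "distr (PiM I M) (PiM J M) (\<lambda>x. restrict x J) = PiM J M"
    using distr_PiM_restrict_finite[OF J] .
  have restrict_meas: "(\<lambda>x. restrict x J) \<in> measurable (PiM I M) (PiM J M)"
    using J(2) by (rule measurable_restrict_subset)
  have int_J: "integrable (PiM J M) ?g"
    using product_integrable_prod[OF J(1) f] by simp
  then have meas_J: "?g \<in> borel_measurable (PiM J M)"
    by auto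
  have restrict_g: "?g (restrict \<omega> J) = ?g \<omega>" for \<omega>
    by (rule prod.cong) auto
  have "integrable (PiM I M) (\<lambda>\<omega>. ?g (restrict \<omega> J))"
    using int_J restrict_distr integrable_distr_eq[OF restrict_meas meas_J] by simp
  moreover have "integral\<^sup>L (PiM I M) (\<lambda>\<omega>. ?g (restrict \<omega> J)) = integral\<^sup>L (PiM J M) ?g"
    using integral_distr[OF restrict_meas meas_J] restrict_distr by simp
  ultimately show ?thesis
    using product_integral_prod[OF J(1) f] restrict_g by simp
qed

lemma noise_covariance:
  "integrable noise_space (\<lambda>\<omega>. \<omega> p * \<omega> q)
 \<and> integral\<^sup>L noise_space (\<lambda>\<omega>. \<omega> p * \<omega> q) = (if p = q then noise_var p else 0)"
proof (cases "p = q")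
  case True
  have "integrable noise_space (\<lambda>\<omega>. \<Prod>i\<in>{p}. \<omega> i * \<omega> i)
     \<and> integral\<^sup>L noise_space (\<lambda>\<omega>. \<Prod>i\<in>{p}. \<omega> i * \<omega> i)
         = (\<Prod>i\<in>{p}. integral\<^sup>L (noise_factor i) (\<lambda>x. x * x))"
    unfolding noise_space_eq_PiM
    by (rule noise.integral_prod_coordinates)
       (auto simp: noise_factor_def normal_moment_2[OF noise_sd_pos])
  then show ?thesis
    using True normal_moment_2[OF noise_sd_pos, of p]
    by (simp add: noise_factor_def noise_var_eq_sd_squared)
next
  case False
  have "integrable noise_space (\<lambda>\<omega>. \<Prod>i\<in>{p, q}. \<omega> i)
     \<and> integral\<^sup>L noise_space (\<lambda>\<omega>. \<Prod>i\<in>{p, q}. \<omega> i)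
         = (\<Prod>i\<in>{p, q}. integral\<^sup>L (noise_factor i) (\<lambda>x. x))"
    unfolding noise_space_eq_PiM
    by (rule noise.integral_prod_coordinates)
       (auto simp: noise_factor_def normal_moment_1[OF noise_sd_pos])
  then show ?thesis
    using False normal_moment_1[OF noise_sd_pos] by (simp add: noise_factor_def)
qed

inductive lin_form :: "(('i \<Rightarrow> real) \<Rightarrow> real) \<Rightarrow> bool" where
  coord: "lin_form (\<lambda>\<omega>. \<omega> p)"
| scale: "lin_form f \<Longrightarrow> lin_form (\<lambda>\<omega>. a * f \<omega>)"
| add: "lin_form f \<Longrightarrow> lin_form g \<Longrightarrow> lin_form (\<lambda>\<omega>. f \<omega> + g \<omega>)"

lemma lin_form_zero: "lin_form (\<lambda>\<omega>. 0)"
  using lin_form.scale[OF lin_form.coord, of 0] by simp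

lemma lin_form_diff: "lin_form f \<Longrightarrow> lin_form g \<Longrightarrow> lin_form (\<lambda>\<omega>. f \<omega> - g \<omega>)"
  using lin_form.add[of f "\<lambda>\<omega>. (-1) * g \<omega>"] lin_form.scale[of g "-1"] by simp

lemma lin_form_divide: "lin_form f \<Longrightarrow> lin_form (\<lambda>\<omega>. f \<omega> / a)"
  using lin_form.scale[of f "1/a"] by simp

lemma lin_form_sum:
  "finite K \<Longrightarrow> (\<And>k. k \<in> K \<Longrightarrow> lin_form (f k)) \<Longrightarrow> lin_form (\<lambda>\<omega>. \<Sum>k\<in>K. f k \<omega>)"
  by (induction K rule: finite_induct) (auto intro: lin_form_zero lin_form.add)

lemma lin_form_mult_coord_integrable:
  assumes "lin_form f"
  shows "integrable noise_space (\<lambda>\<omega>. f \<omega> * \<omega> q)"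
  using assms
proof induction
  case (coord p)
  then show ?case using noise_covariance by blast
next
  case (scale f a)
  then show ?case by (simp add: mult.assoc)
next
  case (add f g)
  then show ?case by (simp add: distrib_right)
qed

lemma lin_form_mult_integrable:
  assumes "lin_form f" "lin_form g"
  shows "integrable noise_space (\<lambda>\<omega>. f \<omega> * g \<omega>)"
  using assms(2)
proof induction
  case (coord p)
  then show ?case using lin_form_mult_coord_integrable[OF assms(1)] .
next
  case (scale g a)
  then show ?case by (simp add: mult.left_commute)
next
  case (add g h)
  then show ?case by (simp add: distrib_left)
qed

lemma hgt_lin_form: "lin_form (\<lambda>\<omega>. hgt L \<omega> r i)"
proof (induction r arbitrary: i)
  case 0
  show ?case
    by (simp, intro lin_form_sum lin_form_diff lin_form_divide lin_form.coord) auto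
next
  case (Suc r)
  show ?case
    by (cases "even (i + int (Suc r))")
       (simp_all only: hgt.simps if_True if_False,
        auto intro!: lin_form.add lin_form_divide lin_form.coord Suc)
qed

definition cov_coord :: "nat \<Rightarrow> nat \<Rightarrow> int \<Rightarrow> nat \<times> nat \<Rightarrow> real" where
  "cov_coord L r i q = integral\<^sup>L noise_space (\<lambda>\<omega>. hgt L \<omega> r i * \<omega> q)"

lemma cov_coord_Suc:
  "cov_coord L (Suc r) i q =
     (if even (i + int (Suc r))
      then (cov_coord L r (i - 1) q + cov_coord L r (i + 1) q) / 2
           + (if (Suc r, site L i) = q then noise_var q else 0)
      else cov_coord L r i q)"
proof (cases "even (i + int (Suc r))")
  case True
  have step: "(\<lambda>\<omega>. hgt L \<omega> (Suc r) i * \<omega> q) =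
      (\<lambda>\<omega>. (hgt L \<omega> r (i - 1) * \<omega> q + hgt L \<omega> r (i + 1) * \<omega> q) / 2
           + \<omega> (Suc r, site L i) * \<omega> q)"
    using True by (auto simp: algebra_simps add_divide_distrib)
  have "integrable noise_space (\<lambda>\<omega>. hgt L \<omega> r k * \<omega> q)" for k
    by (rule lin_form_mult_coord_integrable[OF hgt_lin_form])
  moreover have "integrable noise_space (\<lambda>\<omega>. \<omega> (Suc r, site L i) * \<omega> q)"
    using noise_covariance by blast
  ultimately show ?thesis
    using True noise_covariance[of "(Suc r, site L i)" q]
    unfolding cov_coord_def step by (simp add: integral_add integral_divide_zero)
qed (simp add: cov_coord_def)

lemma site_less: "0 < L \<Longrightarrow> site L i < L"
  unfolding site_def by (simp add: nat_less_iff)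

lemma cov_coord_0:
  assumes "0 < L"
  shows "cov_coord L 0 i q =
     (if fst q = 0 \<and> snd q < site L i then 1 else 0)
     - (if fst q = 0 \<and> snd q < L then real (site L i) / real L else 0)"
proof -
  let ?s = "site L i"
  let ?\<delta> = "\<lambda>k. if (0, k) = q then 1 else 0 :: real"
  have init: "(\<lambda>\<omega>. hgt L \<omega> 0 i * \<omega> q) =
      (\<lambda>\<omega>. \<Sum>k<?s. \<omega> (0, k) * \<omega> q - (\<Sum>m<L. \<omega> (0, m) * \<omega> q) / real L)"
    by (auto simp: sum_distrib_right left_diff_distrib sum_divide_distrib)
  have int_coord: "integrable noise_space (\<lambda>\<omega>. \<omega> (0, m) * \<omega> q)" for m
    using noise_covariance by blast
  have E_coord: "integral\<^sup>L noise_space (\<lambda>\<omega>. \<omega> (0, m) * \<omega> q) = ?\<delta> m" for m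
    using noise_covariance[of "(0, m)" q] by (auto simp: noise_var_def)
  have "cov_coord L 0 i q = (\<Sum>k<?s. ?\<delta> k - (\<Sum>m<L. ?\<delta> m) / real L)"
    unfolding cov_coord_def init
    by (simp add: int_coord E_coord integral_sum integral_diff integral_divide_zero)
  also have "\<dots> = (\<Sum>k<?s. ?\<delta> k) - real ?s * (\<Sum>m<L. ?\<delta> m) / real L"
    by (simp add: sum_subtractf)
  finally show ?thesis
    using site_less[OF assms, of i] by (cases q) (auto simp: sum.delta)
qed

text \<open>Transition kernel of simple random walk: walk_kernel n i is the probability
  that the walk started at 0 is at i after n steps (for n + i even).\<close>

definition binom_int :: "nat \<Rightarrow> int \<Rightarrow> real" where
  "binom_int n k = (if k < 0 then 0 else real (n choose nat k))"

definition walk_kernel :: "nat \<Rightarrow> int \<Rightarrow> real" where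
  "walk_kernel n i = binom_int n ((int n + i) div 2) / 2 ^ n"

lemma binom_int_Suc: "binom_int (Suc n) k = binom_int n (k - 1) + binom_int n k"
proof (cases "k \<le> 0")
  case True
  then show ?thesis by (cases "k = 0") (auto simp: binom_int_def)
next
  case False
  then have "nat k = Suc (nat (k - 1))" by simp
  then show ?thesis using False by (simp add: binom_int_def)
qed

lemma walk_kernel_Suc:
  assumes "even (int n + 1 + i)"
  shows "walk_kernel (Suc n) i = (walk_kernel n (i - 1) + walk_kernel n (i + 1)) / 2"
proof -
  define k where "k = (int n + 1 + i) div 2"
  have "(int (Suc n) + i) div 2 = k" "(int n + (i + 1)) div 2 = k"
    by (simp_all add: k_def add_ac)
  moreover have "(int n + (i - 1)) div 2 = k - 1"
    using assms unfolding k_def by presburger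
  ultimately show ?thesis
    unfolding walk_kernel_def by (simp only: binom_int_Suc) (simp add: field_simps)
qed

lemma walk_kernel_0: "even i \<Longrightarrow> walk_kernel 0 i = (if i = 0 then 1 else 0)"
  by (auto simp: walk_kernel_def binom_int_def elim!: evenE)

lemma g11_eq_walk_kernel:
  assumes "even j"
  shows "g11 s j = 2 * walk_kernel (2 * s) j"
proof -
  obtain m where m: "j = 2 * m" using assms by (auto elim: evenE)
  have k: "(int (2 * s) + j) div 2 = int s + m" and jd: "j div 2 = m"
    using m by simp_all
  show ?thesis
  proof (cases "\<bar>j\<bar> \<le> 2 * int s")
    case True
    then have r: "0 \<le> int s + m" "int s + m \<le> 2 * int s" using m by auto
    then have "nat (int s + m) \<le> 2 * s" "nat (int s - m) = 2 * s - nat (int s + m)"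
      by linarith+
    moreover have "(2::real) ^ (2 * s) = 4 ^ s"
      by (simp add: power_mult)
    ultimately show ?thesis
      using True r binomial_fact[of "nat (int s + m)" "2 * s", where 'a = real]
      unfolding g11_def walk_kernel_def binom_int_def k jd by (simp add: field_simps)
  next
    case False
    then have "int s + m < 0 \<or> nat (int s + m) > 2 * s" using m by auto
    then show ?thesis using False unfolding g11_def walk_kernel_def binom_int_def k jd by auto
  qed
qed

lemma site_window:
  assumes "\<bar>i\<bar> < int L"
  shows "int (site L i) = (if 0 \<le> i then i else i + int L)"
proof (cases "0 \<le> i")
  case True
  then show ?thesis using assms by (simp add: site_def)
next
  case False
  have "(i + int L) mod int L = i + int L"
    using assms False by (intro mod_pos_pos_trivial) auto
  then show ?thesis using False assms by (simp add: site_def)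
qed

lemma site_near_origin:
  assumes "L \<ge> 4"
  shows "site L 0 = 0" "site L 1 = 1" "site L 2 = 2" "site L (-1) = L - 1" "site L (-2) = L - 2"
  using site_window[of 0 L] site_window[of 1 L] site_window[of 2 L]
    site_window[of "-1" L] site_window[of "-2" L] assms
  by auto

lemma site_bulk:
  assumes "L \<ge> 4" and "\<bar>i\<bar> \<le> int L - 2"
  shows "site L i = 0 \<longleftrightarrow> i = 0" "site L i = 1 \<longleftrightarrow> i = 1" "site L i = L - 1 \<longleftrightarrow> i = -1"
    and "i \<notin> {-1, 0, 1} \<Longrightarrow> 2 \<le> site L i \<and> site L i \<le> L - 2"
proof -
  have "\<bar>i\<bar> < int L" using assms by linarith
  note window = site_window[OF this]
  show "site L i = 0 \<longleftrightarrow> i = 0" "site L i = 1 \<longleftrightarrow> i = 1" "site L i = L - 1 \<longleftrightarrow> i = -1"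
    using window assms by (auto split: if_splits)
  show "i \<notin> {-1, 0, 1} \<Longrightarrow> 2 \<le> site L i \<and> site L i \<le> L - 2"
    using window assms by (auto split: if_splits)
qed

text \<open>Unrolling two steps of the dynamics at the origin: the increment
  h^2_0 - h^0_0 involves the initial increments at sites -2,-1,0,1, the noises at sites
  -1 and 1 of time 1, and the noise at site 0 of time 2.\<close>

lemma increment_expansion:
  assumes "L \<ge> 4"
  shows "hgt L \<omega> 2 0 - hgt L \<omega> 0 0 =
    (\<omega> (0, 0) + \<omega> (0, 1) - \<omega> (0, L - 2) - \<omega> (0, L - 1)) / 4
    + (\<omega> (1, L - 1) + \<omega> (1, 1)) / 2 + \<omega> (2, 0)"
proof -
  define n where "n = L - 2"
  have n: "L = Suc (Suc n)" using assms unfolding n_def by simp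
  define m where "m = (\<Sum>k<L. \<omega> (0, k)) / real L"
  note sites = site_near_origin[OF assms]
  have total: "real L * m = (\<Sum>k<n. \<omega> (0, k)) + \<omega> (0, L - 2) + \<omega> (0, L - 1)"
    using assms unfolding m_def n by simp
  have h0: "hgt L \<omega> 0 0 = 0"
    using sites by simp
  have hm2: "hgt L \<omega> 0 (-2) = (\<Sum>k<n. \<omega> (0, k)) - real n * m"
    using sites n by (simp add: sum_subtractf m_def)
  have hp2: "hgt L \<omega> 0 2 = \<omega> (0, 0) + \<omega> (0, 1) - 2 * m"
    using sites by (simp add: m_def numeral_2_eq_2)
  have h1m: "hgt L \<omega> 1 (-1) = (hgt L \<omega> 0 (-2) + hgt L \<omega> 0 0) / 2 + \<omega> (1, L - 1)"
    using sites by simp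
  have h1p: "hgt L \<omega> 1 1 = (hgt L \<omega> 0 0 + hgt L \<omega> 0 2) / 2 + \<omega> (1, 1)"
    using sites by simp
  have h2: "hgt L \<omega> 2 0 = (hgt L \<omega> 1 (-1) + hgt L \<omega> 1 1) / 2 + \<omega> (2, 0)"
    using sites hgt.simps(2)[of L \<omega> 1 0] by (simp add: numeral_2_eq_2)
  have "real L = real n + 2" using n by simp
  then show ?thesis
    using total unfolding h2 h1m h1p h0 hm2 hp2 by (simp add: field_simps)
qed

definition corr :: "nat \<Rightarrow> nat \<Rightarrow> int \<Rightarrow> real" where
  "corr L r i = integral\<^sup>L noise_space (\<lambda>\<omega>. hgt L \<omega> r i * (hgt L \<omega> 2 0 - hgt L \<omega> 0 0))"

definition noise_source :: "nat \<Rightarrow> nat \<Rightarrow> int \<Rightarrow> real" where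
  "noise_source L r i =
     (if (r, site L i) = (1, L - 1) then 1/4 else 0) + (if (r, site L i) = (1, 1) then 1/4 else 0)
     + (if (r, site L i) = (2, 0) then 1/2 else 0)"

lemma corr_expansion:
  assumes "L \<ge> 4"
  shows "corr L r i =
    (cov_coord L r i (0, 0) + cov_coord L r i (0, 1)
       - cov_coord L r i (0, L - 2) - cov_coord L r i (0, L - 1)) / 4
    + (cov_coord L r i (1, L - 1) + cov_coord L r i (1, 1)) / 2 + cov_coord L r i (2, 0)"
proof -
  define X where "X q \<omega> = hgt L \<omega> r i * \<omega> q" for q \<omega>
  have integrable: "integrable noise_space (X q)" for q
    unfolding X_def by (rule lin_form_mult_coord_integrable[OF hgt_lin_form])
  have "(\<lambda>\<omega>. hgt L \<omega> r i * (hgt L \<omega> 2 0 - hgt L \<omega> 0 0)) =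
     (\<lambda>\<omega>. (X (0, 0) \<omega> + X (0, 1) \<omega> - X (0, L - 2) \<omega> - X (0, L - 1) \<omega>) / 4
          + (X (1, L - 1) \<omega> + X (1, 1) \<omega>) / 2 + X (2, 0) \<omega>)"
    unfolding X_def increment_expansion[OF assms] by (simp add: fun_eq_iff field_simps)
  then show ?thesis
    unfolding corr_def cov_coord_def X_def[symmetric]
    by (simp add: integrable integral_add integral_diff integral_divide_zero)
qed

lemma corr_Suc:
  assumes "L \<ge> 4"
  shows "corr L (Suc r) i =
     (if even (i + int (Suc r))
      then (corr L r (i - 1) + corr L r (i + 1)) / 2 + noise_source L (Suc r) i
      else corr L r i)"
proof -
  have "L - 1 \<noteq> 1" using assms by simp
  then show ?thesis
    unfolding corr_expansion[OF assms] noise_source_def cov_coord_Suc[of L r i]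
    by (simp add: noise_var_def field_simps)
qed

lemma corr_0:
  assumes "L \<ge> 4"
  shows "corr L 0 i =
    ((if 0 < site L i then 1 else 0) + (if 1 < site L i then 1 else 0)
     - (if L - 2 < site L i then 1 else 0) - (if L - 1 < site L i then 1 else 0)) / 4"
proof -
  have "0 < L" using assms by simp
  have "L - 2 \<noteq> 0" "L - 2 \<noteq> 1" "L - 1 \<noteq> 0" "L - 1 \<noteq> 1" "L - 2 < L" "L - 1 < L" using assms by simp_all
  then show ?thesis
    unfolding corr_expansion[OF assms] cov_coord_0[OF \<open>0 < L\<close>]
    by (simp add: field_simps)
qed

lemma corr_0_bulk:
  assumes "L \<ge> 4" and "\<bar>i\<bar> \<le> int L - 2"
  shows "corr L 0 i = (if i = 0 then 0 else if i = 1 \<or> i = -1 then 1/4 else 1/2)"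
proof -
  note sites = site_bulk[OF assms]
  consider "i = 0" | "i = 1" | "i = -1" | "i \<notin> {-1, 0, 1}" by blast
  then show ?thesis
  proof cases
    case 1
    then show ?thesis using sites(1) unfolding corr_0[OF assms(1)] by simp
  next
    case 2
    then show ?thesis using sites(2) assms(1) unfolding corr_0[OF assms(1)] by simp
  next
    case 3
    then show ?thesis using sites(3) assms(1) unfolding corr_0[OF assms(1)] by simp
  next
    case 4
    then have "2 \<le> site L i" "site L i \<le> L - 2"
      using sites(4) by auto
    then have "\<not> L - 1 < site L i" "\<not> L - 2 < site L i" "0 < site L i" "1 < site L i"
      using assms(1) by linarith+
    then show ?thesis
      using 4 unfolding corr_0[OF assms(1)] by simp
  qed
qed

lemma noise_source_bulk:
  assumes "L \<ge> 4" and "\<bar>i\<bar> \<le> int L - 2"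
  shows "noise_source L r i =
    (if r = 1 \<and> (i = 1 \<or> i = -1) then 1/4 else 0) + (if r = 2 \<and> i = 0 then 1/2 else 0)"
proof -
  have "L - 1 \<noteq> 1" using assms(1) by simp
  then show ?thesis
    using site_bulk(1-3)[OF assms] unfolding noise_source_def by auto
qed

text \<open>The first two time steps inside the bulk: at time 2 the source term at the
  origin is exactly a point mass of the random-walk kernel.\<close>

lemma corr_1_bulk:
  assumes L: "L \<ge> 4" and i: "\<bar>i\<bar> \<le> int L - 3" and "odd i"
  shows "corr L 1 i = 1/2"
proof -
  have bulk: "\<bar>i - 1\<bar> \<le> int L - 2" "\<bar>i + 1\<bar> \<le> int L - 2" "\<bar>i\<bar> \<le> int L - 2"
    using i by auto
  have "i - 1 \<noteq> 1 \<and> i - 1 \<noteq> -1" "i + 1 \<noteq> 1 \<and> i + 1 \<noteq> -1"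
    using \<open>odd i\<close> by presburger+
  moreover have "corr L 1 i = (corr L 0 (i - 1) + corr L 0 (i + 1)) / 2 + noise_source L 1 i"
    using corr_Suc[OF L, of 0 i] \<open>odd i\<close> by simp
  ultimately show ?thesis
    unfolding corr_0_bulk[OF L bulk(1)] corr_0_bulk[OF L bulk(2)] noise_source_bulk[OF L bulk(3)]
    by auto
qed

lemma corr_2_bulk:
  assumes L: "L \<ge> 4" and i: "\<bar>i\<bar> \<le> int L - 4" and "even i"
  shows "corr L 2 i = 1/2 + walk_kernel 0 i / 2"
proof -
  have bulk: "\<bar>i - 1\<bar> \<le> int L - 3" "\<bar>i + 1\<bar> \<le> int L - 3" "\<bar>i\<bar> \<le> int L - 2"
    using i by auto
  have "odd (i - 1)" "odd (i + 1)"
    using \<open>even i\<close> by auto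
  have "corr L 2 i = (corr L 1 (i - 1) + corr L 1 (i + 1)) / 2 + noise_source L 2 i"
    using corr_Suc[OF L, of 1 i] \<open>even i\<close> unfolding Suc_1 by simp
  also have "\<dots> = 1/2 + (if i = 0 then 1/2 else 0)"
    unfolding corr_1_bulk[OF L bulk(1) \<open>odd (i - 1)\<close>] corr_1_bulk[OF L bulk(2) \<open>odd (i + 1)\<close>]
      noise_source_bulk[OF L bulk(3)] by simp
  finally show ?thesis
    unfolding walk_kernel_0[OF \<open>even i\<close>] by simp
qed

text \<open>Solution of the recursion in the light cone that does not feel the torus:
  from time 2 on there is no source, so the correlation spreads as the random walk.\<close>

lemma corr_light_cone:
  assumes L: "L \<ge> 4" and "r \<ge> 2"
  shows "even (i + int r) \<Longrightarrow> \<bar>i\<bar> + int r \<le> int L - 2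
           \<Longrightarrow> corr L r i = 1/2 + walk_kernel (r - 2) i / 2"
  using \<open>r \<ge> 2\<close>
proof (induction r arbitrary: i rule: dec_induct)
  case base
  then show ?case using corr_2_bulk[OF L] by auto
next
  case (step r)
  have bulk: "\<bar>i\<bar> \<le> int L - 2"
    using step.prems by auto
  have "corr L (Suc r) i = (corr L r (i - 1) + corr L r (i + 1)) / 2 + noise_source L (Suc r) i"
    using corr_Suc[OF L, of r i] step.prems(1) by simp
  moreover have "noise_source L (Suc r) i = 0"
    unfolding noise_source_bulk[OF L bulk] using step.hyps by auto
  moreover have "corr L r (i - 1) = 1/2 + walk_kernel (r - 2) (i - 1) / 2"
    and "corr L r (i + 1) = 1/2 + walk_kernel (r - 2) (i + 1) / 2"
    using step.IH step.prems by auto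
  moreover have "walk_kernel (Suc (r - 2)) i
      = (walk_kernel (r - 2) (i - 1) + walk_kernel (r - 2) (i + 1)) / 2"
    using step.hyps step.prems(1) by (intro walk_kernel_Suc) (simp add: of_nat_diff)
  moreover have "Suc r - 2 = Suc (r - 2)"
    using step.hyps by simp
  ultimately show ?case
    by (simp add: field_simps)
qed

lemma corr_increment:
  assumes L: "L \<ge> 4" and "t \<ge> 1" and j: "even j"
    and cone: "\<bar>j\<bar> + 2 * int t + 2 \<le> int L - 2"
  shows "corr L (2 * t + 2) j - corr L (2 * t) j = - (1/4) * (g11 (t - 1) j - g11 t j)"
proof -
  have "corr L (2 * t + 2) j = 1/2 + walk_kernel (2 * t) j / 2"
    using corr_light_cone[OF L, of "2 * t + 2" j] j cone by simp
  moreover have "corr L (2 * t) j = 1/2 + walk_kernel (2 * (t - 1)) j / 2"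
    using corr_light_cone[OF L, of "2 * t" j] j cone \<open>t \<ge> 1\<close>
    by (simp add: right_diff_distrib')
  ultimately show ?thesis
    unfolding g11_eq_walk_kernel[OF j] by (simp add: field_simps)
qed

lemma expectation_eq_corr_diff:
  "integral\<^sup>L noise_space (\<lambda>\<omega>. (hgt L \<omega> a j - hgt L \<omega> b j) * (hgt L \<omega> 2 0 - hgt L \<omega> 0 0))
     = corr L a j - corr L b j"
proof -
  have integrable: "integrable noise_space (\<lambda>\<omega>. hgt L \<omega> r j * (hgt L \<omega> 2 0 - hgt L \<omega> 0 0))" for r
    by (intro lin_form_mult_integrable lin_form_diff hgt_lin_form)
  show ?thesis
    unfolding corr_def left_diff_distrib by (rule Bochner_Integration.integral_diff[OF integrable integrable])
qed

theorem proposition1: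
  fixes t :: nat and j :: int
  assumes "t \<ge> 1" and "even j"
  shows "(\<forall>L. even L \<and> L \<ge> 2 \<longrightarrow>
            integrable noise_space
              (\<lambda>\<omega>. (hgt L \<omega> (2*t+2) j - hgt L \<omega> (2*t) j) * (hgt L \<omega> 2 0 - hgt L \<omega> 0 0)))
       \<and> ((\<lambda>n. integral\<^sup>L noise_space
              (\<lambda>\<omega>. (hgt (2*n) \<omega> (2*t+2) j - hgt (2*n) \<omega> (2*t) j)
                   * (hgt (2*n) \<omega> 2 0 - hgt (2*n) \<omega> 0 0)))
           \<longlonglongrightarrow> - (1/4) * (g11 (t - 1) j - g11 t j))"
proof (intro conjI allI impI)
  fix L :: nat
  show "integrable noise_space
      (\<lambda>\<omega>. (hgt L \<omega> (2*t+2) j - hgt L \<omega> (2*t) j) * (hgt L \<omega> 2 0 - hgt L \<omega> 0 0))"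
    by (intro lin_form_mult_integrable lin_form_diff hgt_lin_form)
next
  have "integral\<^sup>L noise_space
          (\<lambda>\<omega>. (hgt (2*n) \<omega> (2*t+2) j - hgt (2*n) \<omega> (2*t) j)
               * (hgt (2*n) \<omega> 2 0 - hgt (2*n) \<omega> 0 0))
        = - (1/4) * (g11 (t - 1) j - g11 t j)"
    if "n \<ge> nat (\<bar>j\<bar> + 2 * int t + 4)" for n
  proof -
    have "2 * n \<ge> 4" and "\<bar>j\<bar> + 2 * int t + 2 \<le> int (2 * n) - 2"
      using that \<open>t \<ge> 1\<close> by linarith+
    then show ?thesis
      unfolding expectation_eq_corr_diff using corr_increment assms by blast
  qed
  then show "(\<lambda>n. integral\<^sup>L noise_space
              (\<lambda>\<omega>. (hgt (2*n) \<omega> (2*t+2) j - hgt (2*n) \<omega> (2*t) j)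
                   * (hgt (2*n) \<omega> 2 0 - hgt (2*n) \<omega> 0 0)))
           \<longlonglongrightarrow> - (1/4) * (g11 (t - 1) j - g11 t j)"
    by (intro tendsto_eventually eventually_sequentiallyI)
qed

end
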